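(* Let $u\in L^\infty([0,+\infty);W^{1,p}(\mathbb{T}^d;\mathbb{R}^d))$, $p\in(1,\infty)$, be divergence-free. The set $\mathcal{F}_u$ of initial data mixed by $u$ is open and dense in $L^\infty(\mathbb{T}^d)$ if and only if $\mathcal{N}_u\neq\mathcal{M}$.
   Context: $\mathbb{T}^d$ ($d\ge2$) is the torus with Lebesgue measure; $\mathcal{M}$ is the $\sigma$-algebra of Lebesgue measurable sets. $\Phi_t$ denotes the DiPerna–Lions measure-preserving flow map of $u$ (for a.e. $x$, $t\mapsto\Phi_t(x)$ solves $\dot\gamma=u(t,\gamma)$, $\gamma(0)=x$). $\mathcal{F}_u:=\{\rho\in L^\infty(\mathbb{T}^d)\mid\{\rho\circ\Phi_t^{-1}\}_{t\ge0}\text{ is not precompact in }L^2(\mathbb{T}^d)\}$ and $\mathcal{N}_u:=\{D\in\mathcal{M}\mid \{\mathbbm{1}_D\circ\Phi_t^{-1}\}_{t\ge0}\text{ is precompact in }L^2(\mathbb{T}^d)\}$. $L^\infty(\mathbb{T}^d)$ carries its norm topology. *)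

theory Defs
  imports "HOL-Analysis.Analysis" "HOL-Probability.Essential_Supremum"
begin

(* The torus T^d is modelled by the fundamental cube [0,1)^d with Lebesgue measure;
   points of R^d are projected to the torus by taking fractional parts componentwise. *)

definition cube :: "(real^'d::finite) set" where
  "cube = {x. \<forall>i. 0 \<le> x$i \<and> x$i < 1}"

definition torus :: "(real^'d::finite) measure" where
  "torus = lebesgue_on cube"

definition int_vec :: "real^'d::finite \<Rightarrow> bool" where
  "int_vec k \<longleftrightarrow> (\<forall>i. k$i \<in> \<int>)"

definition periodic :: "(real^'d::finite \<Rightarrow> 'b) \<Rightarrow> bool" where
  "periodic f \<longleftrightarrow> (\<forall>x k. int_vec k \<longrightarrow> f (x + k) = f x)"

definition tproj :: "real^'d::finite \<Rightarrow> real^'d" where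
  "tproj x = (\<chi> i. frac (x$i))"

definition pd :: "(real^'d::finite \<Rightarrow> real) \<Rightarrow> 'd \<Rightarrow> real^'d \<Rightarrow> real" where
  "pd \<phi> j x = frechet_derivative \<phi> (at x) (axis j 1)"

definition test_fun :: "(real^'d::finite \<Rightarrow> real) \<Rightarrow> bool" where
  "test_fun \<phi> \<longleftrightarrow> periodic \<phi> \<and> (\<forall>x. \<phi> differentiable (at x)) \<and>
     (\<forall>j. continuous_on UNIV (pd \<phi> j))"

definition in_Lp :: "real \<Rightarrow> (real^'d::finite \<Rightarrow> real) \<Rightarrow> bool" where
  "in_Lp p f \<longleftrightarrow> f \<in> borel_measurable torus \<and> integrable torus (\<lambda>x. \<bar>f x\<bar> powr p)"

definition Lp_norm :: "real \<Rightarrow> (real^'d::finite \<Rightarrow> real) \<Rightarrow> real" where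
  "Lp_norm p f = (\<integral>x. \<bar>f x\<bar> powr p \<partial>torus) powr (1 / p)"

definition weak_partial :: "(real^'d::finite \<Rightarrow> real) \<Rightarrow> 'd \<Rightarrow> (real^'d \<Rightarrow> real) \<Rightarrow> bool" where
  "weak_partial f j g \<longleftrightarrow> integrable torus f \<and> integrable torus g \<and>
     (\<forall>\<phi>. test_fun \<phi> \<longrightarrow>
        (\<integral>x. f x * pd \<phi> j x \<partial>torus) = - (\<integral>x. g x * \<phi> x \<partial>torus))"

definition W1p_bounded :: "real \<Rightarrow> real \<Rightarrow> (real^'d::finite \<Rightarrow> real^'d) \<Rightarrow> bool" where
  "W1p_bounded p M v \<longleftrightarrow> periodic v \<and>
     (\<exists>G :: 'd \<Rightarrow> 'd \<Rightarrow> real^'d \<Rightarrow> real.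
        (\<forall>i. in_Lp p (\<lambda>x. v x $ i)) \<and>
        (\<forall>i j. in_Lp p (G i j) \<and> weak_partial (\<lambda>x. v x $ i) j (G i j)) \<and>
        (\<Sum>i\<in>UNIV. Lp_norm p (\<lambda>x. v x $ i) + (\<Sum>j\<in>UNIV. Lp_norm p (G i j))) \<le> M)"

definition Linf_W1p :: "real \<Rightarrow> (real \<Rightarrow> real^'d::finite \<Rightarrow> real^'d) \<Rightarrow> bool" where
  "Linf_W1p p u \<longleftrightarrow> (\<lambda>(t, x). u t x) \<in> borel_measurable (lborel \<Otimes>\<^sub>M lborel) \<and>
     (\<exists>M. AE t in lebesgue_on {0..}. W1p_bounded p M (u t))"

definition div_free :: "(real \<Rightarrow> real^'d::finite \<Rightarrow> real^'d) \<Rightarrow> bool" where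
  "div_free u \<longleftrightarrow> (AE t in lebesgue_on {0..}. \<forall>\<phi>. test_fun \<phi> \<longrightarrow>
      (\<integral>x. (\<Sum>i\<in>UNIV. u t x $ i * pd \<phi> i x) \<partial>torus) = 0)"

(* X is a (lifted) regular Lagrangian flow of u: for a.e. x, t \<mapsto> X t x solves
   \<gamma>' = u(t,\<gamma>), \<gamma>(0)=x in the Caratheodory (integral) sense; its torus projection
   \<Phi>_t = tproj \<circ> X t is measure preserving and \<Psi> t is its a.e. inverse. *)
definition flow_map :: "(real \<Rightarrow> real^'d::finite \<Rightarrow> real^'d) \<Rightarrow> real \<Rightarrow> real^'d \<Rightarrow> real^'d" where
  "flow_map X t x = tproj (X t x)"

definition meas_pres :: "(real^'d::finite \<Rightarrow> real^'d) \<Rightarrow> bool" where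
  "meas_pres T \<longleftrightarrow> T \<in> measurable torus torus \<and> distr torus torus T = torus"

definition DL_flow :: "(real \<Rightarrow> real^'d::finite \<Rightarrow> real^'d) \<Rightarrow> (real \<Rightarrow> real^'d \<Rightarrow> real^'d)
     \<Rightarrow> (real \<Rightarrow> real^'d \<Rightarrow> real^'d) \<Rightarrow> bool" where
  "DL_flow u X \<Psi> \<longleftrightarrow>
     (AE x in torus. X 0 x = x \<and> (\<forall>t\<ge>0. (\<lambda>s. u s (X s x)) absolutely_integrable_on {0..t} \<and>
          X t x = x + integral {0..t} (\<lambda>s. u s (X s x)))) \<and>
     (\<forall>t\<ge>0. meas_pres (flow_map X t) \<and> meas_pres (\<Psi> t) \<and>
          (AE x in torus. \<Psi> t (flow_map X t x) = x) \<and>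
          (AE x in torus. flow_map X t (\<Psi> t x) = x))"

definition in_Linf :: "(real^'d::finite \<Rightarrow> real) \<Rightarrow> bool" where
  "in_Linf f \<longleftrightarrow> f \<in> borel_measurable torus \<and> esssup torus (\<lambda>x. ereal \<bar>f x\<bar>) < \<infinity>"

definition Linf_dist :: "(real^'d::finite \<Rightarrow> real) \<Rightarrow> (real^'d \<Rightarrow> real) \<Rightarrow> ereal" where
  "Linf_dist f g = esssup torus (\<lambda>x. ereal \<bar>f x - g x\<bar>)"

definition L2_conv :: "(nat \<Rightarrow> real^'d::finite \<Rightarrow> real) \<Rightarrow> (real^'d \<Rightarrow> real) \<Rightarrow> bool" where
  "L2_conv f g \<longleftrightarrow> g \<in> borel_measurable torus \<and> integrable torus (\<lambda>x. (g x)\<^sup>2) \<and>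
     (\<lambda>n. \<integral>\<^sup>+x. ennreal ((f n x - g x)\<^sup>2) \<partial>torus) \<longlonglongrightarrow> 0"

definition L2_precompact :: "(real^'d::finite \<Rightarrow> real) set \<Rightarrow> bool" where
  "L2_precompact S \<longleftrightarrow>
     (\<forall>f :: nat \<Rightarrow> real^'d \<Rightarrow> real. (\<forall>n. f n \<in> S) \<longrightarrow>
        (\<exists>(r :: nat \<Rightarrow> nat) g. strict_mono r \<and> L2_conv (f \<circ> r) g))"

definition orbit :: "(real \<Rightarrow> real^'d::finite \<Rightarrow> real^'d) \<Rightarrow> (real^'d \<Rightarrow> real) \<Rightarrow> (real^'d \<Rightarrow> real) set" where
  "orbit \<Psi> \<rho> = {(\<lambda>x. \<rho> (\<Psi> t x)) | t. t \<ge> 0}"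

definition mixed_set :: "(real \<Rightarrow> real^'d::finite \<Rightarrow> real^'d) \<Rightarrow> (real^'d \<Rightarrow> real) set" where
  "mixed_set \<Psi> = {\<rho>. in_Linf \<rho> \<and> \<not> L2_precompact (orbit \<Psi> \<rho>)}"

definition nonmixed_sets :: "(real \<Rightarrow> real^'d::finite \<Rightarrow> real^'d) \<Rightarrow> (real^'d) set set" where
  "nonmixed_sets \<Psi> = {D \<in> sets torus. L2_precompact (orbit \<Psi> (indicator D))}"

definition Linf_open :: "(real^'d::finite \<Rightarrow> real) set \<Rightarrow> bool" where
  "Linf_open F \<longleftrightarrow> F \<subseteq> {f. in_Linf f} \<and>
     (\<forall>\<rho>\<in>F. \<exists>\<epsilon>>0. \<forall>\<sigma>. in_Linf \<sigma> \<and> Linf_dist \<sigma> \<rho> < ereal \<epsilon> \<longrightarrow> \<sigma> \<in> F)"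

definition Linf_dense :: "(real^'d::finite \<Rightarrow> real) set \<Rightarrow> bool" where
  "Linf_dense F \<longleftrightarrow> F \<subseteq> {f. in_Linf f} \<and>
     (\<forall>\<rho>. in_Linf \<rho> \<longrightarrow> (\<forall>\<epsilon>>0. \<exists>\<sigma>\<in>F. Linf_dist \<sigma> \<rho> < ereal \<epsilon>))"

end

theory Submission
  imports Defs "HOL-Library.Diagonal_Subsequence"
begin

text \<open>
  Composition with \<open>\<Psi> t\<close> is linear
  and preserves essential bounds, so the functions with \<open>L\<^sup>2\<close>-precompact orbit form a linear
  subspace of \<open>L\<^sup>\<infinity>\<close> that is closed under uniform approximation (by a diagonal argument). The
  mixed set is its complement, hence open. If every indicator is non-mixed, then so is every
  simple function and, by uniform approximation, every element of \<open>L\<^sup>\<infinity>\<close>: the mixed set is empty,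
  hence not dense. Otherwise some indicator \<open>\<one>\<^sub>D\<close> is mixed, and for every non-mixed \<open>\<rho>\<close> the
  function \<open>\<rho> + \<epsilon> \<one>\<^sub>D\<close> is mixed, which gives density.
\<close>

lemma square_sum_le: "((x::real) + y)\<^sup>2 \<le> 2 * x\<^sup>2 + 2 * y\<^sup>2"
proof -
  have "0 \<le> (x - y)\<^sup>2" by simp
  then show ?thesis by (simp add: power2_eq_square algebra_simps)
qed

lemma abs_sub_floor_divide_mult_le:
  fixes y e :: real
  assumes "0 < e"
  shows "\<bar>y - of_int \<lfloor>y / e\<rfloor> * e\<bar> \<le> e"
proof -
  have "of_int \<lfloor>y / e\<rfloor> * e \<le> y"
    using of_int_floor_le[of "y / e"] assms by (simp add: le_divide_eq)
  moreover have "y / e < of_int \<lfloor>y / e\<rfloor> + 1"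
    by (rule real_of_int_floor_add_one_gt)
  then have "y < (of_int \<lfloor>y / e\<rfloor> + 1) * e"
    by (rule pos_divide_less_eq[OF assms, THEN iffD1])
  ultimately show ?thesis
    by (simp add: algebra_simps)
qed

lemma floor_divide_mem_range:
  fixes y M e :: real
  assumes "\<bar>y\<bar> \<le> M" and "0 < e"
  shows "\<lfloor>y / e\<rfloor> \<in> {-\<lceil>M / e\<rceil>..\<lceil>M / e\<rceil>}"
proof -
  have "- M / e \<le> y / e" and "y / e \<le> M / e"
    using divide_right_mono[of "- M" y e] divide_right_mono[of y M e] assms by (auto simp: abs_le_iff)
  then show ?thesis
    unfolding atLeastAtMost_iff le_floor_iff floor_le_iff of_int_minus
    using le_of_int_ceiling[of "M / e"] by linarith
qed

lemma ennreal_tendsto_0_if_eventually_le: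
  fixes X :: "nat \<Rightarrow> ennreal"
  assumes "\<And>e. e > 0 \<Longrightarrow> eventually (\<lambda>n. X n \<le> ennreal e) sequentially"
  shows "X \<longlonglongrightarrow> 0"
proof (rule order_tendstoI)
  fix a :: ennreal assume "0 < a"
  then obtain b where b: "0 < b" "b < a" using dense by blast
  then have "b < top" using less_le_trans top_greatest by blast
  then obtain e where "b = ennreal e" "0 \<le> e" by (cases b) auto
  with b have "0 < e" "ennreal e < a" by auto
  from assms[OF this(1)] show "eventually (\<lambda>n. X n < a) sequentially"
    by (rule eventually_mono) (use \<open>ennreal e < a\<close> in auto)
qed simp

lemma convergent_if_abs_diff_le:
  fixes a d :: "nat \<Rightarrow> real"
  assumes d: "d \<longlonglongrightarrow> 0" and ad: "\<And>k l. \<bar>a k - a l\<bar> \<le> d k + d l"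
  shows "a \<longlonglongrightarrow> lim a" and "\<bar>a k - lim a\<bar> \<le> d k"
proof -
  have "Cauchy a"
  proof (rule metric_CauchyI)
    fix e :: real assume "0 < e"
    then obtain N where N: "\<forall>n\<ge>N. norm (d n - 0) < e / 2"
      using LIMSEQ_D[OF d] half_gt_zero by blast
    then have "dist (a m) (a n) < e" if "m \<ge> N" "n \<ge> N" for m n
    proof -
      have "\<bar>d m\<bar> < e / 2" "\<bar>d n\<bar> < e / 2"
        using N that by auto
      then show ?thesis
        using ad[of m n] unfolding dist_real_def by linarith
    qed
    then show "\<exists>N. \<forall>m\<ge>N. \<forall>n\<ge>N. dist (a m) (a n) < e" by blast
  qed
  then show conv: "a \<longlonglongrightarrow> lim a"
    by (simp add: Cauchy_convergent_iff convergent_LIMSEQ_iff)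
  have "(\<lambda>l. \<bar>a k - a l\<bar>) \<longlonglongrightarrow> \<bar>a k - lim a\<bar>"
    by (intro tendsto_intros conv)
  moreover have "(\<lambda>l. d k + d l) \<longlonglongrightarrow> d k + 0"
    by (intro tendsto_intros d)
  ultimately show "\<bar>a k - lim a\<bar> \<le> d k"
    using ad by (auto intro: LIMSEQ_le)
qed

lemma AE_uniform_limit:
  fixes G :: "nat \<Rightarrow> 'a \<Rightarrow> real"
  assumes "\<And>k. G k \<in> borel_measurable M" and d: "d \<longlonglongrightarrow> 0"
    and "AE x in M. \<forall>k l. \<bar>G k x - G l x\<bar> \<le> d k + d l"
  obtains g where "g \<in> borel_measurable M" and "AE x in M. \<forall>k. \<bar>G k x - g x\<bar> \<le> d k"
proof
  show "(\<lambda>x. lim (\<lambda>k. G k x)) \<in> borel_measurable M"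
    using assms(1) by measurable
  show "AE x in M. \<forall>k. \<bar>G k x - lim (\<lambda>k. G k x)\<bar> \<le> d k"
    using assms(3)
  proof eventually_elim
    case (elim x)
    then show ?case
      by (intro allI convergent_if_abs_diff_le(2)[OF d]) blast
  qed
qed

lemma tendsto_nn_integral_lincomb_0:
  fixes u v :: "nat \<Rightarrow> 'a \<Rightarrow> real"
  assumes "\<And>n. u n \<in> borel_measurable M" "\<And>n. v n \<in> borel_measurable M"
    and "\<And>n x. 0 \<le> u n x" "\<And>n x. 0 \<le> v n x" "0 \<le> a" "0 \<le> b"
    and u: "(\<lambda>n. \<integral>\<^sup>+x. ennreal (u n x) \<partial>M) \<longlonglongrightarrow> 0"
    and v: "(\<lambda>n. \<integral>\<^sup>+x. ennreal (v n x) \<partial>M) \<longlonglongrightarrow> 0"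
  shows "(\<lambda>n. \<integral>\<^sup>+x. ennreal (a * u n x + b * v n x) \<partial>M) \<longlonglongrightarrow> 0"
proof -
  have "(\<integral>\<^sup>+x. ennreal (a * u n x + b * v n x) \<partial>M) =
      ennreal a * (\<integral>\<^sup>+x. ennreal (u n x) \<partial>M) + ennreal b * (\<integral>\<^sup>+x. ennreal (v n x) \<partial>M)" for n
  proof -
    have "(\<integral>\<^sup>+x. ennreal (a * u n x + b * v n x) \<partial>M) =
        (\<integral>\<^sup>+x. ennreal a * ennreal (u n x) + ennreal b * ennreal (v n x) \<partial>M)"
      using assms(3-6) by (intro nn_integral_cong) (simp add: ennreal_plus ennreal_mult)
    also have "\<dots> = ennreal a * (\<integral>\<^sup>+x. ennreal (u n x) \<partial>M) + ennreal b * (\<integral>\<^sup>+x. ennreal (v n x) \<partial>M)"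
      using assms(1,2) by (simp add: nn_integral_add nn_integral_cmult)
    finally show ?thesis .
  qed
  moreover have "(\<lambda>n. ennreal a * (\<integral>\<^sup>+x. ennreal (u n x) \<partial>M) + ennreal b * (\<integral>\<^sup>+x. ennreal (v n x) \<partial>M))
      \<longlonglongrightarrow> ennreal a * 0 + ennreal b * 0"
    by (intro tendsto_add ennreal_tendsto_cmult u v) auto
  ultimately show ?thesis by simp
qed

section \<open>Essentially bounded functions on the torus\<close>

lemma finite_measure_torus: "finite_measure (torus :: (real^'d::finite) measure)"
proof -
  have "cube \<in> sets (borel :: (real^'d) measure)"
    unfolding cube_def by measurable
  then have "cube \<in> sets (lebesgue :: (real^'d) measure)"
    by (simp add: sets_lborel[symmetric] del: sets_lborel)
  moreover have "bounded (cube :: (real^'d) set)"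
    by (rule bounded_subset[OF bounded_cbox[of 0 1]]) (auto simp: cube_def mem_box_cart less_imp_le)
  ultimately have "(cube :: (real^'d) set) \<in> lmeasurable"
    by (simp add: bounded_set_imp_lmeasurable)
  then show ?thesis
    unfolding torus_def by (rule finite_measure_lebesgue_on)
qed

lemma in_Linf_iff:
  "in_Linf f \<longleftrightarrow> f \<in> borel_measurable torus \<and> (\<exists>M. AE x in torus. \<bar>f x\<bar> \<le> M)"
proof
  assume "in_Linf f"
  then have fm: "f \<in> borel_measurable torus" and fin: "esssup torus (\<lambda>x. ereal \<bar>f x\<bar>) < \<infinity>"
    by (auto simp: in_Linf_def)
  have ae: "AE x in torus. ereal \<bar>f x\<bar> \<le> esssup torus (\<lambda>x. ereal \<bar>f x\<bar>)"
    by (rule esssup_AE)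
  show "f \<in> borel_measurable torus \<and> (\<exists>M. AE x in torus. \<bar>f x\<bar> \<le> M)"
  proof (cases "esssup torus (\<lambda>x. ereal \<bar>f x\<bar>)")
    case (real r)
    then show ?thesis using fm ae by auto
  next
    case PInf
    then show ?thesis using fin by simp
  next
    case MInf
    then show ?thesis using fm ae by (auto elim!: eventually_mono)
  qed
next
  assume "f \<in> borel_measurable torus \<and> (\<exists>M. AE x in torus. \<bar>f x\<bar> \<le> M)"
  then obtain M where fm: "f \<in> borel_measurable torus" and M: "AE x in torus. \<bar>f x\<bar> \<le> M"
    by auto
  have "esssup torus (\<lambda>x. ereal \<bar>f x\<bar>) \<le> ereal M"
    using M fm by (intro esssup_I) (auto elim!: eventually_mono)
  then have "esssup torus (\<lambda>x. ereal \<bar>f x\<bar>) < \<infinity>"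
    by (rule le_less_trans) simp
  then show "in_Linf f"
    using fm unfolding in_Linf_def by simp
qed

lemma AE_abs_diff_le_if_Linf_dist_less:
  "Linf_dist f g < ereal e \<Longrightarrow> AE x in torus. \<bar>f x - g x\<bar> \<le> e"
  unfolding Linf_dist_def
  by (rule eventually_mono[OF esssup_AE]) (use le_less_trans in fastforce)

lemma Linf_dist_le_if_AE_abs_diff_le:
  assumes "f \<in> borel_measurable torus" "g \<in> borel_measurable torus"
    and "AE x in torus. \<bar>f x - g x\<bar> \<le> e"
  shows "Linf_dist f g \<le> ereal e"
  unfolding Linf_dist_def using assms by (intro esssup_I) (auto elim!: eventually_mono)

lemma Linf_dense_nonempty:
  fixes F :: "(real^'d::finite \<Rightarrow> real) set"
  assumes "Linf_dense F"
  shows "F \<noteq> {}"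
proof -
  have "in_Linf (\<lambda>x::real^'d. 0)"
    unfolding in_Linf_iff by (auto intro!: exI[of _ 0])
  with assms show "F \<noteq> {}" unfolding Linf_dense_def by (meson zero_less_one empty_iff)
qed

section \<open>Convergence and precompactness in \<open>L\<^sup>2\<close>\<close>

lemma L2_conv_subseq: "L2_conv f g \<Longrightarrow> strict_mono r \<Longrightarrow> L2_conv (f \<circ> r) g"
  unfolding L2_conv_def using LIMSEQ_subseq_LIMSEQ[of _ 0 r] by (auto simp: o_def)

lemma L2_conv_offset: "L2_conv (\<lambda>n. f (n + m)) g \<Longrightarrow> L2_conv f g"
  unfolding L2_conv_def
  using LIMSEQ_offset[of "\<lambda>n. \<integral>\<^sup>+x. ennreal ((f n x - g x)\<^sup>2) \<partial>torus" m] by simp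

lemma L2_conv_lincomb:
  fixes f h :: "nat \<Rightarrow> real^'d::finite \<Rightarrow> real"
  assumes fm: "\<And>n. f n \<in> borel_measurable torus" and hm: "\<And>n. h n \<in> borel_measurable torus"
    and "L2_conv f g1" and "L2_conv h g2"
  shows "L2_conv (\<lambda>n x. a * f n x + b * h n x) (\<lambda>x. a * g1 x + b * g2 x)"
  unfolding L2_conv_def
proof (intro conjI)
  have g1: "g1 \<in> borel_measurable torus" "integrable torus (\<lambda>x. (g1 x)\<^sup>2)"
    and g2: "g2 \<in> borel_measurable torus" "integrable torus (\<lambda>x. (g2 x)\<^sup>2)"
    and l1: "(\<lambda>n. \<integral>\<^sup>+x. ennreal ((f n x - g1 x)\<^sup>2) \<partial>torus) \<longlonglongrightarrow> 0"
    and l2: "(\<lambda>n. \<integral>\<^sup>+x. ennreal ((h n x - g2 x)\<^sup>2) \<partial>torus) \<longlonglongrightarrow> 0"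
    using assms(3,4) unfolding L2_conv_def by auto
  have lincomb_le: "(a * y1 + b * y2)\<^sup>2 \<le> 2 * a\<^sup>2 * y1\<^sup>2 + 2 * b\<^sup>2 * y2\<^sup>2" for y1 y2 :: real
    using square_sum_le[of "a * y1" "b * y2"] by (simp add: power_mult_distrib)
  show "(\<lambda>x. a * g1 x + b * g2 x) \<in> borel_measurable torus"
    using g1 g2 by measurable
  show "integrable torus (\<lambda>x. (a * g1 x + b * g2 x)\<^sup>2)"
  proof (rule Bochner_Integration.integrable_bound)
    show "integrable torus (\<lambda>x. 2 * a\<^sup>2 * (g1 x)\<^sup>2 + 2 * b\<^sup>2 * (g2 x)\<^sup>2)"
      using g1 g2 by auto
    show "(\<lambda>x. (a * g1 x + b * g2 x)\<^sup>2) \<in> borel_measurable torus"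
      using g1 g2 by measurable
    show "AE x in torus. norm ((a * g1 x + b * g2 x)\<^sup>2) \<le> norm (2 * a\<^sup>2 * (g1 x)\<^sup>2 + 2 * b\<^sup>2 * (g2 x)\<^sup>2)"
      using lincomb_le by simp
  qed
  have lim: "(\<lambda>n. \<integral>\<^sup>+x. ennreal (2 * a\<^sup>2 * (f n x - g1 x)\<^sup>2 + 2 * b\<^sup>2 * (h n x - g2 x)\<^sup>2) \<partial>torus) \<longlonglongrightarrow> 0"
    by (rule tendsto_nn_integral_lincomb_0[OF _ _ _ _ _ _ l1 l2]) (use fm hm g1 g2 in auto)
  have le: "(\<integral>\<^sup>+x. ennreal ((a * f n x + b * h n x - (a * g1 x + b * g2 x))\<^sup>2) \<partial>torus)
      \<le> (\<integral>\<^sup>+x. ennreal (2 * a\<^sup>2 * (f n x - g1 x)\<^sup>2 + 2 * b\<^sup>2 * (h n x - g2 x)\<^sup>2) \<partial>torus)" for n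
    using lincomb_le[of "f n _ - g1 _" "h n _ - g2 _"]
    by (intro nn_integral_mono ennreal_leI) (simp add: algebra_simps)
  show "(\<lambda>n. \<integral>\<^sup>+x. ennreal ((a * f n x + b * h n x - (a * g1 x + b * g2 x))\<^sup>2) \<partial>torus) \<longlonglongrightarrow> 0"
    by (rule tendsto_sandwich[OF _ _ tendsto_const lim]) (use le in \<open>auto intro: always_eventually\<close>)
qed

lemma L2_conv_AE_abs_diff_le:
  fixes f h :: "nat \<Rightarrow> real^'d::finite \<Rightarrow> real"
  assumes fm: "\<And>n. f n \<in> borel_measurable torus" and hm: "\<And>n. h n \<in> borel_measurable torus"
    and "L2_conv f g1" and "L2_conv h g2"
    and fh: "\<And>n. AE x in torus. \<bar>f n x - h n x\<bar> \<le> c"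
  shows "AE x in torus. \<bar>g1 x - g2 x\<bar> \<le> c"
proof -
  have g1m: "g1 \<in> borel_measurable torus" and g2m: "g2 \<in> borel_measurable torus"
    and l1: "(\<lambda>n. \<integral>\<^sup>+x. ennreal ((f n x - g1 x)\<^sup>2) \<partial>torus) \<longlonglongrightarrow> 0"
    and l2: "(\<lambda>n. \<integral>\<^sup>+x. ennreal ((h n x - g2 x)\<^sup>2) \<partial>torus) \<longlonglongrightarrow> 0"
    using assms(3,4) unfolding L2_conv_def by auto
  define excess where "excess x = max 0 (\<bar>g1 x - g2 x\<bar> - c)" for x
  have "(excess x)\<^sup>2 \<le> 2 * (f n x - g1 x)\<^sup>2 + 2 * (h n x - g2 x)\<^sup>2"
    if "\<bar>f n x - h n x\<bar> \<le> c" for n x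
  proof -
    have "excess x \<le> \<bar>f n x - g1 x\<bar> + \<bar>h n x - g2 x\<bar>"
      using that by (auto simp: excess_def)
    then have "(excess x)\<^sup>2 \<le> (\<bar>f n x - g1 x\<bar> + \<bar>h n x - g2 x\<bar>)\<^sup>2"
      by (intro power_mono) (auto simp: excess_def)
    then show ?thesis
      using square_sum_le[of "\<bar>f n x - g1 x\<bar>" "\<bar>h n x - g2 x\<bar>"] by simp
  qed
  then have le: "(\<integral>\<^sup>+x. ennreal ((excess x)\<^sup>2) \<partial>torus)
      \<le> (\<integral>\<^sup>+x. ennreal (2 * (f n x - g1 x)\<^sup>2 + 2 * (h n x - g2 x)\<^sup>2) \<partial>torus)" for n
    by (intro nn_integral_mono_AE eventually_mono[OF fh[of n]] ennreal_leI)
  have lim: "(\<lambda>n. \<integral>\<^sup>+x. ennreal (2 * (f n x - g1 x)\<^sup>2 + 2 * (h n x - g2 x)\<^sup>2) \<partial>torus) \<longlonglongrightarrow> 0"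
    by (rule tendsto_nn_integral_lincomb_0[OF _ _ _ _ _ _ l1 l2]) (use fm hm g1m g2m in auto)
  have "(\<integral>\<^sup>+x. ennreal ((excess x)\<^sup>2) \<partial>torus) \<le> 0"
    using LIMSEQ_le_const[OF lim] le by blast
  moreover have "excess \<in> borel_measurable torus"
    unfolding excess_def using g1m g2m by measurable
  ultimately have "AE x in torus. ennreal ((excess x)\<^sup>2) = 0"
    by (simp add: nn_integral_0_iff_AE)
  then show ?thesis
    by (rule eventually_mono) (simp add: excess_def)
qed

lemma integrable_square_if_AE_abs_diff_le:
  fixes G g :: "real^'d::finite \<Rightarrow> real"
  assumes "integrable torus (\<lambda>x. (G x)\<^sup>2)" and "g \<in> borel_measurable torus"
    and "AE x in torus. \<bar>G x - g x\<bar> \<le> c"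
  shows "integrable torus (\<lambda>x. (g x)\<^sup>2)"
proof (rule Bochner_Integration.integrable_bound)
  interpret finite_measure "torus :: (real^'d) measure"
    by (rule finite_measure_torus)
  show "integrable torus (\<lambda>x. 2 * (G x)\<^sup>2 + 2 * c\<^sup>2)"
    using assms(1) by auto
  show "(\<lambda>x. (g x)\<^sup>2) \<in> borel_measurable torus"
    using assms(2) by measurable
  show "AE x in torus. norm ((g x)\<^sup>2) \<le> norm (2 * (G x)\<^sup>2 + 2 * c\<^sup>2)"
    using assms(3)
  proof eventually_elim
    case (elim x)
    then have "\<bar>g x - G x\<bar>\<^sup>2 \<le> c\<^sup>2"
      by (intro power_mono) (simp_all only: abs_minus_commute abs_ge_zero)
    then show ?case
      using square_sum_le[of "G x" "g x - G x"] by simp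
  qed
qed

lemma nn_integral_square_diff_le_approx:
  fixes f F G g :: "real^'d::finite \<Rightarrow> real"
  assumes "F \<in> borel_measurable torus" "G \<in> borel_measurable torus"
    and fF: "AE x in torus. \<bar>f x - F x\<bar> \<le> c" and Gg: "AE x in torus. \<bar>G x - g x\<bar> \<le> c"
  shows "(\<integral>\<^sup>+x. ennreal ((f x - g x)\<^sup>2) \<partial>torus)
    \<le> ennreal (8 * c\<^sup>2 * measure (torus :: (real^'d) measure) (space torus)) + 2 * (\<integral>\<^sup>+x. ennreal ((F x - G x)\<^sup>2) \<partial>torus)"
proof -
  interpret finite_measure "torus :: (real^'d) measure"
    by (rule finite_measure_torus)
  have "(\<integral>\<^sup>+x. ennreal ((f x - g x)\<^sup>2) \<partial>torus)
      \<le> (\<integral>\<^sup>+x. ennreal (8 * c\<^sup>2) + 2 * ennreal ((F x - G x)\<^sup>2) \<partial>torus)"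
  proof (rule nn_integral_mono_AE)
    show "AE x in torus. ennreal ((f x - g x)\<^sup>2) \<le> ennreal (8 * c\<^sup>2) + 2 * ennreal ((F x - G x)\<^sup>2)"
      using fF Gg
    proof eventually_elim
      case (elim x)
      then have "\<bar>f x - g x\<bar>\<^sup>2 \<le> (\<bar>F x - G x\<bar> + 2 * c)\<^sup>2"
        by (intro power_mono) (use elim in arith, simp)
      also have "\<dots> \<le> 8 * c\<^sup>2 + 2 * (F x - G x)\<^sup>2"
        using square_sum_le[of "\<bar>F x - G x\<bar>" "2 * c"] by (simp add: power_mult_distrib)
      finally have "ennreal ((f x - g x)\<^sup>2) \<le> ennreal (8 * c\<^sup>2 + 2 * (F x - G x)\<^sup>2)"
        by (intro ennreal_leI) simp
      then show ?case
        by (simp add: ennreal_mult')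
    qed
  qed
  also have "\<dots> = ennreal (8 * c\<^sup>2) * emeasure (torus :: (real^'d) measure) (space torus)
      + 2 * (\<integral>\<^sup>+x. ennreal ((F x - G x)\<^sup>2) \<partial>torus)"
    using assms(1,2) by (simp add: nn_integral_add nn_integral_cmult)
  also have "\<dots> = ennreal (8 * c\<^sup>2 * measure (torus :: (real^'d) measure) (space torus))
      + 2 * (\<integral>\<^sup>+x. ennreal ((F x - G x)\<^sup>2) \<partial>torus)"
    by (simp add: emeasure_eq_measure ennreal_mult)
  finally show ?thesis .
qed

lemma L2_conv_if_uniform_approx:
  fixes f :: "nat \<Rightarrow> real^'d::finite \<Rightarrow> real" and F :: "nat \<Rightarrow> nat \<Rightarrow> real^'d \<Rightarrow> real"
  assumes F: "\<And>k. L2_conv (F k) (G k)" and Fm: "\<And>k n. F k n \<in> borel_measurable torus"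
    and d: "d \<longlonglongrightarrow> 0" and fF: "\<And>k n. AE x in torus. \<bar>f n x - F k n x\<bar> \<le> d k"
    and gm: "g \<in> borel_measurable torus" and Gg: "AE x in torus. \<forall>k. \<bar>G k x - g x\<bar> \<le> d k"
  shows "L2_conv f g"
proof -
  define \<mu> where "\<mu> = measure (torus :: (real^'d) measure) (space torus)"
  have Gm: "G k \<in> borel_measurable torus" and G2: "integrable torus (\<lambda>x. (G k x)\<^sup>2)"
    and FG: "(\<lambda>n. \<integral>\<^sup>+x. ennreal ((F k n x - G k x)\<^sup>2) \<partial>torus) \<longlonglongrightarrow> 0" for k
    using F[of k] unfolding L2_conv_def by auto
  have Gg_k: "AE x in torus. \<bar>G k x - g x\<bar> \<le> d k" for k
    using Gg by eventually_elim blast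
  have bound: "(\<integral>\<^sup>+x. ennreal ((f n x - g x)\<^sup>2) \<partial>torus)
      \<le> ennreal (8 * (d k)\<^sup>2 * \<mu>) + 2 * (\<integral>\<^sup>+x. ennreal ((F k n x - G k x)\<^sup>2) \<partial>torus)" for k n
    unfolding \<mu>_def by (rule nn_integral_square_diff_le_approx[OF Fm Gm fF Gg_k])
  have "integrable torus (\<lambda>x. (g x)\<^sup>2)"
    by (rule integrable_square_if_AE_abs_diff_le[OF G2 gm Gg_k])
  moreover have "(\<lambda>n. \<integral>\<^sup>+x. ennreal ((f n x - g x)\<^sup>2) \<partial>torus) \<longlonglongrightarrow> 0"
  proof (rule ennreal_tendsto_0_if_eventually_le)
    fix e :: real
    assume "e > 0"
    have "(\<lambda>k. 8 * (d k)\<^sup>2 * \<mu>) \<longlonglongrightarrow> 8 * 0\<^sup>2 * \<mu>"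
      by (intro tendsto_intros d)
    from order_tendstoD(2)[OF this, of "e / 2"]
    have "eventually (\<lambda>k. 8 * (d k)\<^sup>2 * \<mu> < e / 2) sequentially"
      using \<open>e > 0\<close> by simp
    then obtain k where k: "8 * (d k)\<^sup>2 * \<mu> < e / 2"
      using eventually_happens'[OF sequentially_bot] by blast
    have "eventually (\<lambda>n. (\<integral>\<^sup>+x. ennreal ((F k n x - G k x)\<^sup>2) \<partial>torus) < ennreal (e / 4)) sequentially"
      using order_tendstoD(2)[OF FG[of k]] \<open>e > 0\<close> by simp
    then show "eventually (\<lambda>n. (\<integral>\<^sup>+x. ennreal ((f n x - g x)\<^sup>2) \<partial>torus) \<le> ennreal e) sequentially"
    proof eventually_elim
      case (elim n)
      have "2 * (\<integral>\<^sup>+x. ennreal ((F k n x - G k x)\<^sup>2) \<partial>torus) \<le> 2 * ennreal (e / 4)"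
        using elim by (intro mult_left_mono) auto
      also have "\<dots> = ennreal (e / 2)"
        using ennreal_mult'[of 2 "e / 4"] \<open>e > 0\<close> by simp
      finally have "(\<integral>\<^sup>+x. ennreal ((f n x - g x)\<^sup>2) \<partial>torus) \<le> ennreal (8 * (d k)\<^sup>2 * \<mu>) + ennreal (e / 2)"
        using bound[of n k] by (meson add_left_mono order_trans)
      also have "\<dots> = ennreal (8 * (d k)\<^sup>2 * \<mu> + e / 2)"
        using \<open>e > 0\<close> by (simp add: \<mu>_def)
      also have "\<dots> \<le> ennreal e"
        using k by (intro ennreal_leI) simp
      finally show ?case .
    qed
  qed
  ultimately show ?thesis
    unfolding L2_conv_def using gm by blast
qed

lemma L2_precompact_diagonal:
  fixes F :: "nat \<Rightarrow> nat \<Rightarrow> real^'d::finite \<Rightarrow> real"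
  assumes S: "\<And>k. L2_precompact (S k)" and F: "\<And>k n. F k n \<in> S k"
  obtains r G where "strict_mono r" and "\<And>k. L2_conv (\<lambda>n. F k (r n)) (G k)"
proof -
  interpret subseqs "\<lambda>k s. \<exists>g. L2_conv (\<lambda>n. F k (s n)) g"
  proof
    fix k and s :: "nat \<Rightarrow> nat"
    obtain r g where "strict_mono r" "L2_conv ((\<lambda>n. F k (s n)) \<circ> r) g"
      using S[of k, unfolded L2_precompact_def, rule_format, of "\<lambda>n. F k (s n)"] F by blast
    then show "\<exists>r. strict_mono r \<and> (\<exists>g. L2_conv (\<lambda>n. F k ((s \<circ> r) n)) g)"
      by (auto simp: o_def)
  qed
  have "\<exists>g. L2_conv (\<lambda>n. F k (diagseq n)) g" for k
  proof -
    have "\<exists>g. L2_conv (\<lambda>n. F k ((diagseq \<circ> (+) (Suc k)) n)) g"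
    proof (rule diagseq_holds)
      fix r s :: "nat \<Rightarrow> nat" and j
      assume "strict_mono r" "\<exists>g. L2_conv (\<lambda>n. F j (s n)) g"
      then show "\<exists>g. L2_conv (\<lambda>n. F j ((s \<circ> r) n)) g"
        using L2_conv_subseq[of "\<lambda>n. F j (s n)" _ r] by (auto simp: o_def)
    qed
    then obtain g where "L2_conv (\<lambda>n. F k (diagseq (n + Suc k))) g"
      by (auto simp: o_def add.commute)
    then show ?thesis
      using L2_conv_offset[of "\<lambda>n. F k (diagseq n)" "Suc k"] by blast
  qed
  then show thesis
    using that subseq_diagseq by metis
qed

lemma L2_precompact_if_uniform_approx:
  fixes S :: "(real^'d::finite \<Rightarrow> real) set" and T :: "real \<Rightarrow> (real^'d \<Rightarrow> real) set"
  assumes T: "\<And>e. e > 0 \<Longrightarrow> L2_precompact (T e)"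
    and Tm: "\<And>e. e > 0 \<Longrightarrow> T e \<subseteq> borel_measurable torus"
    and approx: "\<And>e f. e > 0 \<Longrightarrow> f \<in> S \<Longrightarrow> \<exists>h\<in>T e. AE x in torus. \<bar>f x - h x\<bar> \<le> e"
  shows "L2_precompact S"
  unfolding L2_precompact_def
proof (intro allI impI)
  fix f :: "nat \<Rightarrow> real^'d \<Rightarrow> real"
  assume f: "\<forall>n. f n \<in> S"
  define d :: "nat \<Rightarrow> real" where "d k = inverse (Suc k)" for k
  have d0: "d k > 0" for k
    by (simp add: d_def)
  have d: "d \<longlonglongrightarrow> 0"
    unfolding d_def by (rule LIMSEQ_inverse_real_of_nat)
  have "\<forall>k n. \<exists>h. h \<in> T (d k) \<and> (AE x in torus. \<bar>f n x - h x\<bar> \<le> d k)"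
    using approx d0 f by blast
  then obtain F where FT: "\<And>k n. F k n \<in> T (d k)"
    and fF: "\<And>k n. AE x in torus. \<bar>f n x - F k n x\<bar> \<le> d k"
    by metis
  have Fm: "F k n \<in> borel_measurable torus" for k n
    using Tm[OF d0] FT by blast
  obtain r G where r: "strict_mono r" and G: "\<And>k. L2_conv (\<lambda>n. F k (r n)) (G k)"
    by (rule L2_precompact_diagonal[of "\<lambda>k. T (d k)" F]) (use T d0 FT in auto)
  have Gm: "G k \<in> borel_measurable torus" for k
    using G[of k] unfolding L2_conv_def by blast
  have "AE x in torus. \<bar>G k x - G l x\<bar> \<le> d k + d l" for k l
  proof (rule L2_conv_AE_abs_diff_le[OF _ _ G[of k] G[of l]])
    show "AE x in torus. \<bar>F k (r n) x - F l (r n) x\<bar> \<le> d k + d l" for n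
      using fF[where k = k and n = "r n"] fF[where k = l and n = "r n"] by eventually_elim linarith
  qed (rule Fm)+
  then have "AE x in torus. \<forall>k l. \<bar>G k x - G l x\<bar> \<le> d k + d l"
    by (simp add: AE_all_countable)
  then obtain g where gm: "g \<in> borel_measurable torus" and Gg: "AE x in torus. \<forall>k. \<bar>G k x - g x\<bar> \<le> d k"
    by (rule AE_uniform_limit[OF Gm d])
  have "L2_conv (\<lambda>n. f (r n)) g"
    by (rule L2_conv_if_uniform_approx[OF G Fm d fF gm Gg])
  then show "\<exists>r g. strict_mono r \<and> L2_conv (f \<circ> r) g"
    using r by (auto simp: o_def)
qed

section \<open>Orbits under measure-preserving maps\<close>

locale measure_preserving_flow =
  fixes \<Psi> :: "real \<Rightarrow> real^'d::finite \<Rightarrow> real^'d"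
  assumes meas_pres_flow: "\<And>t. 0 \<le> t \<Longrightarrow> meas_pres (\<Psi> t)"
begin

lemma AE_comp_flow:
  assumes "0 \<le> t" and "AE y in torus. P y"
  shows "AE x in torus. P (\<Psi> t x)"
proof -
  have "\<Psi> t \<in> measurable torus torus" and "distr torus torus (\<Psi> t) = torus"
    using meas_pres_flow[OF assms(1)] unfolding meas_pres_def by auto
  then show ?thesis
    using assms(2) by (metis AE_distrD)
qed

lemma borel_measurable_comp_flow:
  "0 \<le> t \<Longrightarrow> \<rho> \<in> borel_measurable torus \<Longrightarrow> (\<lambda>x. \<rho> (\<Psi> t x)) \<in> borel_measurable torus"
  using meas_pres_flow unfolding meas_pres_def by (blast intro: measurable_compose)

lemma orbit_seqE:
  assumes "\<forall>n. f n \<in> orbit \<Psi> \<rho>"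
  obtains t where "\<And>n. 0 \<le> t n" and "\<And>n. f n = (\<lambda>x. \<rho> (\<Psi> (t n) x))"
proof -
  have "\<forall>n. \<exists>t. 0 \<le> t \<and> f n = (\<lambda>x. \<rho> (\<Psi> t x))"
    using assms unfolding orbit_def by blast
  then show ?thesis
    using that by metis
qed

lemma L2_precompact_orbit_lincomb:
  assumes \<rho>m: "\<rho> \<in> borel_measurable torus" and \<sigma>m: "\<sigma> \<in> borel_measurable torus"
    and \<rho>: "L2_precompact (orbit \<Psi> \<rho>)" and \<sigma>: "L2_precompact (orbit \<Psi> \<sigma>)"
  shows "L2_precompact (orbit \<Psi> (\<lambda>x. a * \<rho> x + b * \<sigma> x))"
  unfolding L2_precompact_def
proof (intro allI impI)
  fix f :: "nat \<Rightarrow> real^'d \<Rightarrow> real"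
  assume "\<forall>n. f n \<in> orbit \<Psi> (\<lambda>x. a * \<rho> x + b * \<sigma> x)"
  then obtain t where t0: "\<And>n. 0 \<le> t n"
    and f: "\<And>n. f n = (\<lambda>x. a * \<rho> (\<Psi> (t n) x) + b * \<sigma> (\<Psi> (t n) x))"
    by (rule orbit_seqE) blast
  have orbits: "(\<lambda>x. \<rho> (\<Psi> (t n) x)) \<in> orbit \<Psi> \<rho>" "(\<lambda>x. \<sigma> (\<Psi> (t n) x)) \<in> orbit \<Psi> \<sigma>" for n
    using t0 unfolding orbit_def by blast+
  obtain r1 g1 where r1: "strict_mono r1" and g1: "L2_conv ((\<lambda>n x. \<rho> (\<Psi> (t n) x)) \<circ> r1) g1"
    using \<rho>[unfolded L2_precompact_def, rule_format, of "\<lambda>n x. \<rho> (\<Psi> (t n) x)"] orbits by blast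
  obtain r2 g2 where r2: "strict_mono r2" and g2: "L2_conv ((\<lambda>n x. \<sigma> (\<Psi> (t (r1 n)) x)) \<circ> r2) g2"
    using \<sigma>[unfolded L2_precompact_def, rule_format, of "\<lambda>n x. \<sigma> (\<Psi> (t (r1 n)) x)"] orbits by blast
  have "L2_conv (\<lambda>n x. a * \<rho> (\<Psi> (t (r1 (r2 n))) x) + b * \<sigma> (\<Psi> (t (r1 (r2 n))) x))
      (\<lambda>x. a * g1 x + b * g2 x)"
    using L2_conv_subseq[OF g1 r2] g2 t0 \<rho>m \<sigma>m
    by (intro L2_conv_lincomb) (auto simp: o_def intro: borel_measurable_comp_flow)
  then have "L2_conv (f \<circ> (r1 \<circ> r2)) (\<lambda>x. a * g1 x + b * g2 x)"
    by (simp add: f o_def)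
  then show "\<exists>r g. strict_mono r \<and> L2_conv (f \<circ> r) g"
    using strict_mono_o[OF r1 r2] by blast
qed

lemma L2_precompact_orbit_sum_indicator:
  assumes "finite K" and "\<And>k. k \<in> K \<Longrightarrow> A k \<in> sets torus"
    and "\<And>k. k \<in> K \<Longrightarrow> L2_precompact (orbit \<Psi> (indicator (A k)))"
  shows "L2_precompact (orbit \<Psi> (\<lambda>x. \<Sum>k\<in>K. c k * indicator (A k) x))"
  using assms
proof (induction K rule: finite_induct)
  case empty
  show ?case
    unfolding L2_precompact_def
  proof (intro allI impI)
    fix f :: "nat \<Rightarrow> real^'d \<Rightarrow> real"
    assume "\<forall>n. f n \<in> orbit \<Psi> (\<lambda>x. \<Sum>k\<in>{}. c k * indicator (A k) x)"
    then have "L2_conv (f \<circ> id) (\<lambda>x. 0)"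
      unfolding L2_conv_def orbit_def by (simp add: o_def)
    then show "\<exists>r g. strict_mono r \<and> L2_conv (f \<circ> r) g"
      using strict_mono_id by blast
  qed
next
  case (insert k K)
  have "(\<lambda>x. \<Sum>k\<in>K. c k * indicator (A k) x) \<in> borel_measurable torus"
    using insert.prems by (intro borel_measurable_sum) auto
  then have "L2_precompact (orbit \<Psi> (\<lambda>x. c k * indicator (A k) x + 1 * (\<Sum>k\<in>K. c k * indicator (A k) x)))"
    using insert by (intro L2_precompact_orbit_lincomb) auto
  then show ?case
    by (simp only: sum.insert[OF insert.hyps] mult_1)
qed

lemma L2_precompact_orbit_if_uniform_approx:
  assumes "\<And>e. e > 0 \<Longrightarrow> \<exists>\<sigma>\<in>borel_measurable torus.
      L2_precompact (orbit \<Psi> \<sigma>) \<and> (AE x in torus. \<bar>\<rho> x - \<sigma> x\<bar> \<le> e)"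
  shows "L2_precompact (orbit \<Psi> \<rho>)"
proof -
  have "\<forall>e. \<exists>\<sigma>. e > 0 \<longrightarrow> \<sigma> \<in> borel_measurable torus \<and>
      L2_precompact (orbit \<Psi> \<sigma>) \<and> (AE x in torus. \<bar>\<rho> x - \<sigma> x\<bar> \<le> e)"
    using assms by blast
  then obtain \<sigma> where \<sigma>m: "\<And>e. e > 0 \<Longrightarrow> \<sigma> e \<in> borel_measurable torus"
    and \<sigma>: "\<And>e. e > 0 \<Longrightarrow> L2_precompact (orbit \<Psi> (\<sigma> e))"
    and \<rho>\<sigma>: "\<And>e. e > 0 \<Longrightarrow> AE x in torus. \<bar>\<rho> x - \<sigma> e x\<bar> \<le> e"
    by metis
  show ?thesis
  proof (rule L2_precompact_if_uniform_approx[where T = "\<lambda>e. orbit \<Psi> (\<sigma> e)"])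
    show "L2_precompact (orbit \<Psi> (\<sigma> e))" if "e > 0" for e
      using \<sigma>[OF that] .
    show "orbit \<Psi> (\<sigma> e) \<subseteq> borel_measurable torus" if "e > 0" for e
      using borel_measurable_comp_flow \<sigma>m[OF that] unfolding orbit_def by blast
  next
    fix e :: real and f
    assume "e > 0" and "f \<in> orbit \<Psi> \<rho>"
    then obtain t where "0 \<le> t" and "f = (\<lambda>x. \<rho> (\<Psi> t x))"
      unfolding orbit_def by blast
    show "\<exists>h\<in>orbit \<Psi> (\<sigma> e). AE x in torus. \<bar>f x - h x\<bar> \<le> e"
    proof (rule bexI)
      show "AE x in torus. \<bar>f x - \<sigma> e (\<Psi> t x)\<bar> \<le> e"
        unfolding \<open>f = (\<lambda>x. \<rho> (\<Psi> t x))\<close> using AE_comp_flow[OF \<open>0 \<le> t\<close> \<rho>\<sigma>[OF \<open>e > 0\<close>]] .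
      show "(\<lambda>x. \<sigma> e (\<Psi> t x)) \<in> orbit \<Psi> (\<sigma> e)"
        using \<open>0 \<le> t\<close> unfolding orbit_def by blast
    qed
  qed
qed

lemma L2_precompact_orbit_if_indicators:
  assumes ind: "\<And>D. D \<in> sets torus \<Longrightarrow> L2_precompact (orbit \<Psi> (indicator D))"
    and "in_Linf \<rho>"
  shows "L2_precompact (orbit \<Psi> \<rho>)"
proof -
  obtain M where \<rho>m: "\<rho> \<in> borel_measurable torus" and M: "AE x in torus. \<bar>\<rho> x\<bar> \<le> M"
    using \<open>in_Linf \<rho>\<close> by (auto simp: in_Linf_iff)
  show ?thesis
  proof (rule L2_precompact_orbit_if_uniform_approx)
    fix e :: real
    assume "e > 0"
    define K where "K = {-\<lceil>M / e\<rceil>..\<lceil>M / e\<rceil>}"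
    define A where "A k = {x \<in> space torus. \<lfloor>\<rho> x / e\<rfloor> = k}" for k
    define \<sigma> where "\<sigma> x = (\<Sum>k\<in>K. (of_int k * e) * indicator (A k) x)" for x
    have A: "A k \<in> sets torus" for k
      unfolding A_def using \<rho>m by measurable
    have "\<sigma> \<in> borel_measurable torus"
      unfolding \<sigma>_def using A by (intro borel_measurable_sum) auto
    moreover have "L2_precompact (orbit \<Psi> \<sigma>)"
      unfolding \<sigma>_def[abs_def] using A ind by (intro L2_precompact_orbit_sum_indicator) (auto simp: K_def)
    moreover have "AE x in torus. \<bar>\<rho> x - \<sigma> x\<bar> \<le> e"
      using M AE_space
    proof eventually_elim
      case (elim x)
      then have "\<lfloor>\<rho> x / e\<rfloor> \<in> K"
        unfolding K_def using floor_divide_mem_range \<open>e > 0\<close> by blast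
      then have "\<sigma> x = of_int \<lfloor>\<rho> x / e\<rfloor> * e"
        using elim unfolding \<sigma>_def A_def by (simp add: indicator_def sum.delta' K_def)
      then show ?case
        using abs_sub_floor_divide_mult_le[OF \<open>e > 0\<close>] by simp
    qed
    ultimately show "\<exists>\<sigma>\<in>borel_measurable torus.
        L2_precompact (orbit \<Psi> \<sigma>) \<and> (AE x in torus. \<bar>\<rho> x - \<sigma> x\<bar> \<le> e)"
      by blast
  qed
qed

lemma Linf_open_mixed_set: "Linf_open (mixed_set \<Psi>)"
  unfolding Linf_open_def
proof (intro conjI ballI)
  show "mixed_set \<Psi> \<subseteq> {f. in_Linf f}"
    by (auto simp: mixed_set_def)
next
  fix \<rho>
  assume "\<rho> \<in> mixed_set \<Psi>"
  then have "\<not> L2_precompact (orbit \<Psi> \<rho>)"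
    by (simp add: mixed_set_def)
  show "\<exists>\<epsilon>>0. \<forall>\<sigma>. in_Linf \<sigma> \<and> Linf_dist \<sigma> \<rho> < ereal \<epsilon> \<longrightarrow> \<sigma> \<in> mixed_set \<Psi>"
  proof (rule ccontr)
    assume contra: "\<not> (\<exists>\<epsilon>>0. \<forall>\<sigma>. in_Linf \<sigma> \<and> Linf_dist \<sigma> \<rho> < ereal \<epsilon> \<longrightarrow> \<sigma> \<in> mixed_set \<Psi>)"
    have "\<exists>\<sigma>\<in>borel_measurable torus. L2_precompact (orbit \<Psi> \<sigma>) \<and> (AE x in torus. \<bar>\<rho> x - \<sigma> x\<bar> \<le> e)"
      if "e > 0" for e
    proof -
      obtain \<sigma> where "in_Linf \<sigma>" "Linf_dist \<sigma> \<rho> < ereal e" "\<sigma> \<notin> mixed_set \<Psi>"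
        using contra \<open>e > 0\<close> by blast
      then show ?thesis
        using AE_abs_diff_le_if_Linf_dist_less[of \<sigma> \<rho> e]
        by (auto simp: mixed_set_def in_Linf_def abs_minus_commute)
    qed
    then have "L2_precompact (orbit \<Psi> \<rho>)"
      by (rule L2_precompact_orbit_if_uniform_approx)
    with \<open>\<not> L2_precompact (orbit \<Psi> \<rho>)\<close> show False ..
  qed
qed

lemma not_L2_precompact_orbit_add_indicator:
  assumes "\<rho> \<in> borel_measurable torus" and "L2_precompact (orbit \<Psi> \<rho>)"
    and "D \<in> sets torus" and "\<not> L2_precompact (orbit \<Psi> (indicator D))" and "c \<noteq> 0"
  shows "\<not> L2_precompact (orbit \<Psi> (\<lambda>x. \<rho> x + c * indicator D x))"
proof
  assume "L2_precompact (orbit \<Psi> (\<lambda>x. \<rho> x + c * indicator D x))"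
  then have "L2_precompact (orbit \<Psi> (\<lambda>x. (1 / c) * (\<rho> x + c * indicator D x) + (- 1 / c) * \<rho> x))"
    using assms(1-3) by (intro L2_precompact_orbit_lincomb) auto
  moreover have "(\<lambda>x. (1 / c) * (\<rho> x + c * indicator D x) + (- 1 / c) * \<rho> x) = indicator D"
    using \<open>c \<noteq> 0\<close> by (auto simp: field_simps)
  ultimately show False
    using assms(4) by simp
qed

lemma Linf_dense_mixed_set:
  assumes "D \<in> sets torus" and "\<not> L2_precompact (orbit \<Psi> (indicator D))"
  shows "Linf_dense (mixed_set \<Psi>)"
  unfolding Linf_dense_def
proof (intro conjI allI impI)
  show "mixed_set \<Psi> \<subseteq> {f. in_Linf f}"
    by (auto simp: mixed_set_def)
  fix \<rho> :: "real^'d \<Rightarrow> real" and \<epsilon> :: real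
  assume "in_Linf \<rho>" and "0 < \<epsilon>"
  then obtain M where \<rho>m: "\<rho> \<in> borel_measurable torus" and M: "AE x in torus. \<bar>\<rho> x\<bar> \<le> M"
    by (auto simp: in_Linf_iff)
  show "\<exists>\<sigma>\<in>mixed_set \<Psi>. Linf_dist \<sigma> \<rho> < ereal \<epsilon>"
  proof (cases "L2_precompact (orbit \<Psi> \<rho>)")
    case False
    then have "\<rho> \<in> mixed_set \<Psi>"
      using \<open>in_Linf \<rho>\<close> by (simp add: mixed_set_def)
    moreover have "Linf_dist \<rho> \<rho> \<le> ereal 0"
      using \<rho>m by (intro Linf_dist_le_if_AE_abs_diff_le) auto
    moreover have "ereal 0 < ereal \<epsilon>"
      using \<open>0 < \<epsilon>\<close> by simp
    ultimately show ?thesis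
      using le_less_trans by blast
  next
    case True
    define \<sigma> where "\<sigma> x = \<rho> x + (\<epsilon> / 2) * indicator D x" for x
    have \<sigma>m: "\<sigma> \<in> borel_measurable torus"
      unfolding \<sigma>_def using \<rho>m \<open>D \<in> sets torus\<close> by measurable
    have "AE x in torus. \<bar>\<sigma> x\<bar> \<le> M + \<epsilon> / 2"
      using M by eventually_elim (use \<open>0 < \<epsilon>\<close> in \<open>auto simp: \<sigma>_def indicator_def\<close>)
    then have "\<sigma> \<in> mixed_set \<Psi>"
      using \<sigma>m not_L2_precompact_orbit_add_indicator[OF \<rho>m True assms, of "\<epsilon> / 2"] \<open>0 < \<epsilon>\<close>
      by (auto simp: mixed_set_def in_Linf_iff \<sigma>_def[abs_def])
    moreover have "Linf_dist \<sigma> \<rho> \<le> ereal (\<epsilon> / 2)"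
      using \<sigma>m \<rho>m \<open>0 < \<epsilon>\<close>
      by (intro Linf_dist_le_if_AE_abs_diff_le) (auto simp: \<sigma>_def indicator_def)
    moreover have "ereal (\<epsilon> / 2) < ereal \<epsilon>"
      using \<open>0 < \<epsilon>\<close> by simp
    ultimately show ?thesis
      using le_less_trans by blast
  qed
qed

lemma mixed_set_eq_empty_if_all_nonmixed:
  assumes "nonmixed_sets \<Psi> = sets torus"
  shows "mixed_set \<Psi> = {}"
proof -
  have "L2_precompact (orbit \<Psi> (indicator D))" if "D \<in> sets torus" for D
    using that assms unfolding nonmixed_sets_def by blast
  then show ?thesis
    unfolding mixed_set_def using L2_precompact_orbit_if_indicators by blast
qed

end

theorem corollary4p5:
  fixes u :: "real \<Rightarrow> real^'d::finite \<Rightarrow> real^'d"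
    and X \<Psi> :: "real \<Rightarrow> real^'d \<Rightarrow> real^'d"
    and p :: real
  assumes "CARD('d) \<ge> 2"
    and "1 < p"
    and "Linf_W1p p u"
    and "div_free u"
    and "DL_flow u X \<Psi>"
  shows "(Linf_open (mixed_set \<Psi>) \<and> Linf_dense (mixed_set \<Psi>))
           \<longleftrightarrow> nonmixed_sets \<Psi> \<noteq> sets torus"
proof -
  interpret measure_preserving_flow \<Psi>
    using \<open>DL_flow u X \<Psi>\<close> by unfold_locales (simp add: DL_flow_def)
  show ?thesis
  proof
    assume "Linf_open (mixed_set \<Psi>) \<and> Linf_dense (mixed_set \<Psi>)"
    then show "nonmixed_sets \<Psi> \<noteq> sets torus"
      using Linf_dense_nonempty mixed_set_eq_empty_if_all_nonmixed by blast
  next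
    assume "nonmixed_sets \<Psi> \<noteq> sets torus"
    then obtain D where "D \<in> sets torus" and "\<not> L2_precompact (orbit \<Psi> (indicator D))"
      unfolding nonmixed_sets_def by blast
    then show "Linf_open (mixed_set \<Psi>) \<and> Linf_dense (mixed_set \<Psi>)"
      using Linf_open_mixed_set Linf_dense_mixed_set by blast
  qed
qed

end
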